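(* Let $d\ge3$, let $P$ be a probability measure on $\mathbb{R}^d$ and $f\in L^2(P)$. Suppose: (i) there is $\bar c>0$ such that for every $m\in\mathbb N$ and every two-layer network $f_m({\bm x})=\sum_{i=1}^m a_i\sigma({\bm w}_i^T\tilde{\bm x})$ with $m$ neurons, $\|f-f_m\|_{L^2(P)}\ge\bar c\,m^{-1/(d-1)}$; (ii) there is $C>0$ such that for every Barron function $g$ and every $m\in\mathbb N$ there is a two-layer network $f_m$ with $m$ neurons satisfying $\|g-f_m\|_{L^2(P)}\le C\|g\|_{\mathcal B}/\sqrt m$. Then there is a constant $c_d>0$ depending only on $\bar c$, $C$ and $d$ such that for every $\varepsilon\in(0,\bar c/4]$ and every Barron function $\tilde f$ with $\|f-\tilde f\|_{L^2(P)}<\varepsilon$, \[ \|\tilde f\|_{\mathcal B}\ge c_d\,\varepsilon^{-\frac{d-3}{2}}. \]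
   Context: $\sigma(z)=\max(z,0)$, $\tilde{\bm x}=({\bm x}^T,1)^T$. A Barron function is $g({\bm x})=\mathbb{E}_{(a,{\bm w})\sim\rho}[a\sigma({\bm w}^T\tilde{\bm x})]$ for a probability measure $\rho$ on $\mathbb{R}\times\mathbb{R}^{d+1}$ with finite $\mathbb{E}_\rho[|a|\|{\bm w}\|_1]$; its Barron norm $\|g\|_{\mathcal B}$ is the infimum of $\mathbb{E}_\rho[|a|\|{\bm w}\|_1]$ over all such representations. *)

theory Defs
  imports "HOL-Probability.Probability"
begin

definition relu :: "real \<Rightarrow> real" where
  "relu z = max z 0"

text \<open>Weight vector w = (v, b) in R^(d+1) acts on x~ = (x,1) as v . x + b.
  Its l1 norm is the sum of absolute coordinates.\<close>
definition l1_weight :: "'a::euclidean_space \<times> real \<Rightarrow> real" where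
  "l1_weight w = (\<Sum>i\<in>Basis. \<bar>fst w \<bullet> i\<bar>) + \<bar>snd w\<bar>"

definition neuron :: "real \<times> ('a::euclidean_space \<times> real) \<Rightarrow> 'a \<Rightarrow> real" where
  "neuron p x = fst p * relu (fst (snd p) \<bullet> x + snd (snd p))"

definition two_layer_net :: "nat \<Rightarrow> (nat \<Rightarrow> real) \<Rightarrow> (nat \<Rightarrow> 'a::euclidean_space) \<Rightarrow> (nat \<Rightarrow> real) \<Rightarrow> 'a \<Rightarrow> real" where
  "two_layer_net m a v b x = (\<Sum>i<m. a i * relu (v i \<bullet> x + b i))"

definition barron_rep :: "(real \<times> ('a::euclidean_space \<times> real)) measure \<Rightarrow> ('a \<Rightarrow> real) \<Rightarrow> bool" where
  "barron_rep \<rho> g \<longleftrightarrow> prob_space \<rho> \<and> sets \<rho> = sets borel \<and>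
     integrable \<rho> (\<lambda>p. \<bar>fst p\<bar> * l1_weight (snd p)) \<and>
     (\<forall>x. g x = (\<integral>p. neuron p x \<partial>\<rho>))"

definition barron_function :: "('a::euclidean_space \<Rightarrow> real) \<Rightarrow> bool" where
  "barron_function g \<longleftrightarrow> (\<exists>\<rho>. barron_rep \<rho> g)"

definition barron_norm :: "('a::euclidean_space \<Rightarrow> real) \<Rightarrow> real" where
  "barron_norm g = Inf {(\<integral>p. \<bar>fst p\<bar> * l1_weight (snd p) \<partial>\<rho>) | \<rho>. barron_rep \<rho> g}"

definition L2_norm :: "'a measure \<Rightarrow> ('a \<Rightarrow> real) \<Rightarrow> ennreal" where
  "L2_norm P h = (let I = (\<integral>\<^sup>+ x. ennreal ((h x)\<^sup>2) \<partial>P) in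
     if I = \<top> then \<top> else ennreal (sqrt (enn2real I)))"

definition in_L2 :: "'a measure \<Rightarrow> ('a \<Rightarrow> real) \<Rightarrow> bool" where
  "in_L2 P f \<longleftrightarrow> f \<in> borel_measurable P \<and> integrable P (\<lambda>x. (f x)\<^sup>2)"

end

theory Submission
  imports Defs
begin

text \<open>Choose the width \<open>m \<approx> (cbar / (2 \<epsilon>)) ^ (d - 1)\<close>, the largest for which hypothesis (i)
  still keeps every \<open>m\<close>-neuron network at \<open>L\<^sup>2\<close>-distance at least \<open>2 \<epsilon>\<close> from \<open>f\<close>. By (ii) some
  \<open>m\<close>-neuron network is within \<open>C \<parallel>f'\<parallel>\<^sub>\<B> / \<surd>m\<close> of the Barron function \<open>f'\<close>, which is within \<open>\<epsilon>\<close>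
  of \<open>f\<close>; the weak triangle inequality \<open>\<parallel>u + v\<parallel>\<^sup>2 \<le> 2 \<parallel>u\<parallel>\<^sup>2 + 2 \<parallel>v\<parallel>\<^sup>2\<close> then forces
  \<open>C \<parallel>f'\<parallel>\<^sub>\<B> / \<surd>m > \<epsilon>\<close>, i.e. \<open>\<parallel>f'\<parallel>\<^sub>\<B> > \<epsilon> \<surd>m / C \<sim> \<epsilon> ^ (1 - (d - 1) / 2)\<close>.\<close>

lemma barron_norm_nonneg: "barron_function g \<Longrightarrow> barron_norm g \<ge> 0"
  unfolding barron_function_def barron_norm_def
  by (auto intro!: cInf_greatest simp: l1_weight_def)

lemma barron_function_borel_measurable:
  assumes "barron_function (g :: 'a::euclidean_space \<Rightarrow> real)"
  shows "g \<in> borel_measurable borel"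
proof -
  obtain \<rho> where "prob_space \<rho>" and sets_\<rho>: "sets \<rho> = sets borel"
    and g: "\<And>x. g x = (\<integral>p. neuron p x \<partial>\<rho>)"
    using assms unfolding barron_function_def barron_rep_def by blast
  interpret prob_space \<rho> by fact
  have "(\<lambda>z::'a \<times> real \<times> 'a \<times> real. neuron (snd z) (fst z)) \<in> borel_measurable borel"
    unfolding neuron_def relu_def by (intro borel_measurable_continuous_onI continuous_intros)
  then have "(\<lambda>(x, p). neuron p x) \<in> borel_measurable (borel \<Otimes>\<^sub>M \<rho>)"
    unfolding measurable_cong_sets[OF sets_pair_measure_cong[OF refl sets_\<rho>] refl]
    by (simp add: case_prod_beta' borel_prod)
  then have "(\<lambda>x. \<integral>p. neuron p x \<partial>\<rho>) \<in> borel_measurable borel"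
    by (rule borel_measurable_lebesgue_integral)
  moreover have "g = (\<lambda>x. \<integral>p. neuron p x \<partial>\<rho>)"
    using g by blast
  ultimately show ?thesis
    by simp
qed

lemma two_layer_net_borel_measurable:
  "two_layer_net m a v b \<in> borel_measurable (borel :: 'a::euclidean_space measure)"
  unfolding two_layer_net_def[abs_def] relu_def
  by (intro borel_measurable_continuous_onI continuous_intros)

lemma L2_norm_le_ennreal_iff:
  assumes "r \<ge> 0"
  shows "L2_norm P h \<le> ennreal r \<longleftrightarrow> (\<integral>\<^sup>+ x. ennreal ((h x)\<^sup>2) \<partial>P) \<le> ennreal (r\<^sup>2)"
proof (cases "\<integral>\<^sup>+ x. ennreal ((h x)\<^sup>2) \<partial>P" rule: ennreal_cases)
  case (real y)
  then show ?thesis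
    using assms real_sqrt_le_iff[of y "r\<^sup>2"] by (simp add: L2_norm_def)
qed (simp add: L2_norm_def top_unique)

lemma ennreal_le_L2_norm_iff:
  assumes "r \<ge> 0"
  shows "ennreal r \<le> L2_norm P h \<longleftrightarrow> ennreal (r\<^sup>2) \<le> (\<integral>\<^sup>+ x. ennreal ((h x)\<^sup>2) \<partial>P)"
proof (cases "\<integral>\<^sup>+ x. ennreal ((h x)\<^sup>2) \<partial>P" rule: ennreal_cases)
  case (real y)
  then show ?thesis
    using assms real_sqrt_le_iff[of "r\<^sup>2" y] by (simp add: L2_norm_def)
qed (simp add: L2_norm_def)

lemma nn_integral_square_add_le:
  assumes "u \<in> borel_measurable P" "v \<in> borel_measurable P"
  shows "(\<integral>\<^sup>+ x. ennreal ((u x + v x)\<^sup>2) \<partial>P) \<le>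
    2 * (\<integral>\<^sup>+ x. ennreal ((u x)\<^sup>2) \<partial>P) + 2 * (\<integral>\<^sup>+ x. ennreal ((v x)\<^sup>2) \<partial>P)"
proof -
  have "ennreal ((u x + v x)\<^sup>2) \<le> 2 * ennreal ((u x)\<^sup>2) + 2 * ennreal ((v x)\<^sup>2)" for x
  proof -
    have "(u x + v x)\<^sup>2 \<le> 2 * (u x)\<^sup>2 + 2 * (v x)\<^sup>2"
      using zero_le_power2[of "u x - v x"] by (simp add: power2_sum power2_diff)
    then have "ennreal ((u x + v x)\<^sup>2) \<le> ennreal (2 * (u x)\<^sup>2 + 2 * (v x)\<^sup>2)"
      by (rule ennreal_leI)
    then show ?thesis
      by (simp add: ennreal_plus ennreal_mult)
  qed
  then have "(\<integral>\<^sup>+ x. ennreal ((u x + v x)\<^sup>2) \<partial>P)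
      \<le> (\<integral>\<^sup>+ x. 2 * ennreal ((u x)\<^sup>2) + 2 * ennreal ((v x)\<^sup>2) \<partial>P)"
    by (rule nn_integral_mono)
  also have "\<dots> = 2 * (\<integral>\<^sup>+ x. ennreal ((u x)\<^sup>2) \<partial>P) + 2 * (\<integral>\<^sup>+ x. ennreal ((v x)\<^sup>2) \<partial>P)"
    using assms by (simp add: nn_integral_add nn_integral_cmult)
  finally show ?thesis .
qed

lemma L2_norm_add_lower_bound:
  assumes "u \<in> borel_measurable P" "v \<in> borel_measurable P" "c \<ge> 0" "r \<ge> 0"
    and "ennreal c \<le> L2_norm P (\<lambda>x. u x + v x)"
    and "L2_norm P u < ennreal e" "L2_norm P v \<le> ennreal r"
  shows "c\<^sup>2 < 2 * e\<^sup>2 + 2 * r\<^sup>2"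
proof -
  have "e > 0"
    using assms(6) by (metis ennreal_eq_0_iff not_less_zero not_less)
  then have "(\<integral>\<^sup>+ x. ennreal ((u x)\<^sup>2) \<partial>P) < ennreal (e\<^sup>2)"
    using assms(6) ennreal_le_L2_norm_iff[of e P u] by (meson less_le not_le)
  then obtain U where U: "(\<integral>\<^sup>+ x. ennreal ((u x)\<^sup>2) \<partial>P) = ennreal U" "0 \<le> U" "U < e\<^sup>2"
    by (cases "\<integral>\<^sup>+ x. ennreal ((u x)\<^sup>2) \<partial>P" rule: ennreal_cases) (auto simp: ennreal_less_iff)
  have "(\<integral>\<^sup>+ x. ennreal ((v x)\<^sup>2) \<partial>P) \<le> ennreal (r\<^sup>2)"
    using assms(4,7) L2_norm_le_ennreal_iff by blast
  then obtain V where V: "(\<integral>\<^sup>+ x. ennreal ((v x)\<^sup>2) \<partial>P) = ennreal V" "0 \<le> V" "V \<le> r\<^sup>2"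
    by (cases "\<integral>\<^sup>+ x. ennreal ((v x)\<^sup>2) \<partial>P" rule: ennreal_cases) (auto simp: top_unique)
  have "ennreal (c\<^sup>2) \<le> (\<integral>\<^sup>+ x. ennreal ((u x + v x)\<^sup>2) \<partial>P)"
    using ennreal_le_L2_norm_iff[OF assms(3), of P "\<lambda>x. u x + v x"] assms(5) by blast
  also have "\<dots> \<le> 2 * ennreal U + 2 * ennreal V"
    using nn_integral_square_add_le[OF assms(1,2)] U(1) V(1) by simp
  also have "\<dots> = ennreal (2 * U + 2 * V)"
    using U(2) V(2) by (simp add: ennreal_plus ennreal_mult)
  finally have "c\<^sup>2 \<le> 2 * U + 2 * V"
    using U(2) V(2) by (simp add: ennreal_le_iff del: ennreal_plus)
  then show ?thesis
    using U(3) V(3) by linarith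
qed

lemma width_for_accuracy:
  fixes d cbar \<epsilon> :: real
  assumes "d > 1" "0 < \<epsilon>" "2 * \<epsilon> \<le> cbar"
  obtains m :: nat where "m \<ge> 1" "2 * \<epsilon> \<le> cbar * real m powr (-1 / (d - 1))"
    "(cbar / 2) powr ((d - 1) / 2) / sqrt 2 * \<epsilon> powr (- (d - 3) / 2) \<le> \<epsilon> * sqrt (real m)"
proof
  define q where "q = cbar / (2 * \<epsilon>)"
  define X where "X = q powr (d - 1)"
  define m where "m = nat \<lfloor>X\<rfloor>"
  have "q \<ge> 1"
    using assms unfolding q_def by simp
  then have "X \<ge> 1"
    unfolding X_def using assms(1) by (simp add: ge_one_powr_ge_zero)
  then have "1 \<le> \<lfloor>X\<rfloor>"
    by simp
  then have "m \<ge> 1" and m_le: "real m \<le> X" and m_ge: "X / 2 \<le> real m"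
    unfolding m_def using floor_correct[of X] by linarith+
  show "m \<ge> 1" by fact
  have "2 * \<epsilon> / cbar = X powr (-1 / (d - 1))"
    unfolding X_def q_def using assms \<open>q \<ge> 1\<close> by (simp add: powr_powr powr_minus_divide q_def)
  also have "\<dots> \<le> real m powr (-1 / (d - 1))"
    using assms(1) \<open>m \<ge> 1\<close> m_le by (intro powr_mono2') auto
  finally show "2 * \<epsilon> \<le> cbar * real m powr (-1 / (d - 1))"
    using assms by (simp add: field_simps)
  define t where "t = (d - 1) / 2"
  have "sqrt X = (cbar / 2) powr t / \<epsilon> powr t"
    using \<open>X \<ge> 1\<close> assms
    by (simp add: X_def q_def t_def powr_half_sqrt[symmetric] powr_powr powr_divide powr_mult)
  moreover have "\<epsilon> powr (- (d - 3) / 2) = \<epsilon> / \<epsilon> powr t"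
  proof -
    have "- (d - 3) / 2 = 1 - t"
      unfolding t_def by (simp add: field_simps)
    then show ?thesis
      using assms(2) by (simp only: powr_diff powr_one_gt_zero_iff) simp
  qed
  ultimately have "(cbar / 2) powr ((d - 1) / 2) / sqrt 2 * \<epsilon> powr (- (d - 3) / 2) = \<epsilon> * sqrt (X / 2)"
    by (simp add: t_def real_sqrt_divide mult.commute)
  also have "\<dots> \<le> \<epsilon> * sqrt (real m)"
    using m_ge assms(2) by simp
  finally show "(cbar / 2) powr ((d - 1) / 2) / sqrt 2 * \<epsilon> powr (- (d - 3) / 2) \<le> \<epsilon> * sqrt (real m)" .
qed

lemma barron_norm_lower_bound:
  fixes P :: "'a::euclidean_space measure" and d cbar C \<epsilon> :: real
  assumes "d > 1" "C > 0" "sets P = sets borel" "f \<in> borel_measurable P"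
    and lower: "\<And>m a v b. m \<ge> 1 \<Longrightarrow>
      ennreal (cbar * real m powr (-1 / (d - 1))) \<le> L2_norm P (\<lambda>x. f x - two_layer_net m a v b x)"
    and upper: "\<And>m. m \<ge> 1 \<Longrightarrow> \<exists>a v b.
      L2_norm P (\<lambda>x. ft x - two_layer_net m a v b x) \<le> ennreal (C * barron_norm ft / sqrt (real m))"
    and "barron_function ft" "0 < \<epsilon>" "2 * \<epsilon> \<le> cbar"
    and close: "L2_norm P (\<lambda>x. f x - ft x) < ennreal \<epsilon>"
  shows "(cbar / 2) powr ((d - 1) / 2) / (sqrt 2 * C) * \<epsilon> powr (- (d - 3) / 2) \<le> barron_norm ft"
proof -
  obtain m where "m \<ge> 1" and width: "2 * \<epsilon> \<le> cbar * real m powr (-1 / (d - 1))"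
    and sqrt_m: "(cbar / 2) powr ((d - 1) / 2) / sqrt 2 * \<epsilon> powr (- (d - 3) / 2) \<le> \<epsilon> * sqrt (real m)"
    using width_for_accuracy assms(1,8,9) by blast
  obtain a v b where approx:
    "L2_norm P (\<lambda>x. ft x - two_layer_net m a v b x) \<le> ennreal (C * barron_norm ft / sqrt (real m))"
    using upper \<open>m \<ge> 1\<close> by blast
  have measurable: "ft \<in> borel_measurable P" "two_layer_net m a v b \<in> borel_measurable P"
    using barron_function_borel_measurable[OF \<open>barron_function ft\<close>] two_layer_net_borel_measurable
    by (simp_all add: measurable_cong_sets[OF assms(3) refl])
  have "(2 * \<epsilon>)\<^sup>2 < 2 * \<epsilon>\<^sup>2 + 2 * (C * barron_norm ft / sqrt (real m))\<^sup>2"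
  proof (rule L2_norm_add_lower_bound[OF _ _ _ _ _ close approx])
    show "ennreal (2 * \<epsilon>) \<le> L2_norm P (\<lambda>x. (f x - ft x) + (ft x - two_layer_net m a v b x))"
      using lower[OF \<open>m \<ge> 1\<close>, of a v b] ennreal_leI[OF width] by (simp add: order_trans)
  qed (use assms(4,8) measurable barron_norm_nonneg[OF \<open>barron_function ft\<close>] \<open>C > 0\<close> in auto)
  then have "\<epsilon> < C * barron_norm ft / sqrt (real m)"
    using assms(2,8) barron_norm_nonneg[OF \<open>barron_function ft\<close>]
    by (simp add: power_mult_distrib power_less_imp_less_base)
  then have "\<epsilon> * sqrt (real m) / C < barron_norm ft"
    using \<open>m \<ge> 1\<close> \<open>C > 0\<close> by (simp add: field_simps)
  moreover have "(cbar / 2) powr ((d - 1) / 2) / (sqrt 2 * C) * \<epsilon> powr (- (d - 3) / 2) \<le> \<epsilon> * sqrt (real m) / C"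
    using sqrt_m \<open>C > 0\<close> by (simp add: field_simps)
  ultimately show ?thesis
    by linarith
qed

theorem mainTheorem6:
  fixes cbar C :: real
  assumes "DIM('a::euclidean_space) \<ge> 3" and "cbar > 0" and "C > 0"
  shows "\<exists>cd > 0. \<forall>(P :: 'a measure) (f :: 'a \<Rightarrow> real).
    prob_space P \<and> sets P = sets borel \<and> in_L2 P f \<and>
    (\<forall>m a v b. m \<ge> 1 \<longrightarrow>
       L2_norm P (\<lambda>x. f x - two_layer_net m a v b x)
         \<ge> ennreal (cbar * real m powr (- 1 / (real DIM('a) - 1)))) \<and>
    (\<forall>g. barron_function g \<longrightarrow> (\<forall>m. m \<ge> 1 \<longrightarrow> (\<exists>a v b.
       L2_norm P (\<lambda>x. g x - two_layer_net m a v b x)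
         \<le> ennreal (C * barron_norm g / sqrt (real m)))))
    \<longrightarrow> (\<forall>\<epsilon> ft. 0 < \<epsilon> \<and> \<epsilon> \<le> cbar / 4 \<and> barron_function ft \<and>
           L2_norm P (\<lambda>x. f x - ft x) < ennreal \<epsilon> \<longrightarrow>
           barron_norm ft \<ge> cd * \<epsilon> powr (- (real DIM('a) - 3) / 2))"
proof (intro exI[of _ "(cbar / 2) powr ((real DIM('a) - 1) / 2) / (sqrt 2 * C)"] conjI allI impI;
    (elim conjE)?)
  show "(cbar / 2) powr ((real DIM('a) - 1) / 2) / (sqrt 2 * C) > 0"
    using assms(2,3) by simp
qed (rule barron_norm_lower_bound; use assms in \<open>auto simp: in_L2_def\<close>)

end
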